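(* Let $M\ge1$ and let $x_{1:\infty}$ be an $M$-bounded displacement enumeration with respect to a language $K$, with arbitrary noise rate and possibly omissions. Then for any language $L\subseteq K$, $$\mu_{\rm low}(L,K)\ge\frac1M\liminf_{n\to\infty}\frac{|L\cap\{x_1,\dots,x_n\}|}{n},\qquad \mu_{\rm up}(L,K)\ge\frac1M\limsup_{n\to\infty}\frac{|L\cap\{x_1,\dots,x_n\}|}{n}.$$
   Context: The universe is $U=\mathbb{N}$ with its natural order; a language is an infinite subset of $U$, with canonical enumeration $\ell_1<\ell_2<\cdots$. For $A,B\subseteq\mathbb{N}$ with $B=\{b_1<b_2<\cdots\}$, $\mu_{\rm up}(A,B)=\limsup_n\frac1n|A\cap\{b_1,\dots,b_n\}|$ and $\mu_{\rm low}(A,B)=\liminf_n\frac1n|A\cap\{b_1,\dots,b_n\}|$. For $x\in U$, $\sigma(x,L)=j$ if $x=\ell_j$ and $0$ if $x\notin L$. A sequence $x_1,x_2,\dots$ of distinct elements of $U$ is an $M$-bounded displacement enumeration with respect to $L$ if there is $n^\star$ with $\sigma(x_n,L)\le Mn$ for all $n\ge n^\star$. *)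

theory Defs
  imports "HOL-Analysis.Analysis" "HOL-Library.Liminf_Limsup"
begin

text \<open>A language is an infinite subset of the naturals. Its canonical enumeration
  l_1 < l_2 < ... is given (1-indexed) by l_j = enumerate L (j - 1).\<close>

definition language :: "nat set \<Rightarrow> bool" where
  "language L \<longleftrightarrow> infinite L"

definition canon :: "nat set \<Rightarrow> nat \<Rightarrow> nat" where
  "canon L j = enumerate L (j - 1)"

definition prefix :: "nat set \<Rightarrow> nat \<Rightarrow> nat set" where
  "prefix B n = canon B ` {1..n}"

definition mu_up :: "nat set \<Rightarrow> nat set \<Rightarrow> ereal" where
  "mu_up A B = limsup (\<lambda>n. ereal (real (card (A \<inter> prefix B n)) / real n))"

definition mu_low :: "nat set \<Rightarrow> nat set \<Rightarrow> ereal" where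
  "mu_low A B = liminf (\<lambda>n. ereal (real (card (A \<inter> prefix B n)) / real n))"

definition sigma :: "nat \<Rightarrow> nat set \<Rightarrow> nat" where
  "sigma x L = (if x \<in> L then (THE j. j \<ge> 1 \<and> canon L j = x) else 0)"

text \<open>A sequence x_1, x_2, ... (x 0 is ignored) of distinct elements is an
  M-bounded displacement enumeration w.r.t. L.\<close>
definition bounded_disp_enum :: "real \<Rightarrow> (nat \<Rightarrow> nat) \<Rightarrow> nat set \<Rightarrow> bool" where
  "bounded_disp_enum M x L \<longleftrightarrow>
     inj_on x {1..} \<and>
     (\<exists>nstar. \<forall>n. n \<ge> 1 \<and> n \<ge> nstar \<longrightarrow> real (sigma (x n) L) \<le> M * real n)"

end

theory Submission
  imports Defs "HOL-Real_Asymp.Real_Asymp"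
begin

text \<open>An element of L listed as x_i with i beyond the threshold n* has rank at most M i in K,
  so it lies among the first m elements k_1 < ... < k_m of K as soon as M n \<le> m. Hence
  |L \<inter> {x_1,...,x_n}| \<le> |L \<inter> {k_1,...,k_m}| + n* whenever M n \<le> m. Coupling n with
  m \<approx> M n (for the limsup) or m with n \<approx> m / M (for the liminf) and dividing, the additive
  constant disappears in the limit and the ratio m / n contributes the factor 1 / M.\<close>

lemma sigma_enumerate:
  assumes "infinite K"
  shows "sigma (enumerate K k) K = Suc k"
proof -
  have "enumerate K k \<in> K" by (rule enumerate_in_set[OF assms])
  moreover have "(THE j. 1 \<le> j \<and> canon K j = enumerate K k) = Suc k"
  proof (rule the_equality)
    fix j assume "1 \<le> j \<and> canon K j = enumerate K k"
    then have "enumerate K (j - 1) = enumerate K k" "1 \<le> j" by (auto simp: canon_def)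
    then show "j = Suc k"
      using strict_mono_eq[OF strict_mono_enumerate[OF assms]] by fastforce
  qed (simp add: canon_def)
  ultimately show ?thesis by (simp add: sigma_def)
qed

lemma mem_prefix_if_sigma_le:
  assumes "infinite K" "v \<in> K" "sigma v K \<le> m"
  shows "v \<in> prefix K m"
proof -
  obtain k where k: "enumerate K k = v" using enumerate_Ex[OF assms(1,2)] by blast
  then have "Suc k \<in> {1..m}" using assms(3) sigma_enumerate[OF assms(1)] by auto
  moreover have "canon K (Suc k) = v" using k by (simp add: canon_def)
  ultimately show ?thesis unfolding prefix_def by blast
qed

lemma bounded_disp_enum_card_le:
  assumes "bounded_disp_enum M x K" "infinite K" "L \<subseteq> K" "0 \<le> M"
  obtains C where "\<And>n m. M * real n \<le> real m \<Longrightarrow>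
    card (L \<inter> x ` {1..n}) \<le> card (L \<inter> prefix K m) + C"
proof -
  obtain nstar where nstar:
      "\<And>i. 1 \<le> i \<Longrightarrow> nstar \<le> i \<Longrightarrow> real (sigma (x i) K) \<le> M * real i"
    using assms(1) by (auto simp: bounded_disp_enum_def)
  have "card (L \<inter> x ` {1..n}) \<le> card (L \<inter> prefix K m) + nstar"
    if Mn: "M * real n \<le> real m" for n m
  proof -
    have "L \<inter> x ` {1..n} \<subseteq> x ` {..<nstar} \<union> (L \<inter> prefix K m)"
    proof
      fix v assume "v \<in> L \<inter> x ` {1..n}"
      then obtain i where i: "i \<in> {1..n}" "v = x i" "v \<in> L" by auto
      show "v \<in> x ` {..<nstar} \<union> (L \<inter> prefix K m)"
      proof (cases "i < nstar")
        case False
        have "real (sigma v K) \<le> M * real i" using nstar[of i] False i by auto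
        also have "\<dots> \<le> M * real n" using i assms(4) by (simp add: mult_left_mono)
        finally have "sigma v K \<le> m" using Mn by linarith
        then show ?thesis using i assms(2,3) mem_prefix_if_sigma_le by blast
      qed (use i in auto)
    qed
    then have "card (L \<inter> x ` {1..n}) \<le> card (x ` {..<nstar} \<union> (L \<inter> prefix K m))"
      by (intro card_mono) (simp_all add: prefix_def)
    also have "\<dots> \<le> card (x ` {..<nstar}) + card (L \<inter> prefix K m)"
      by (rule card_Un_le)
    also have "\<dots> \<le> card (L \<inter> prefix K m) + nstar"
      using card_image_le[of "{..<nstar}" x] by simp
    finally show ?thesis .
  qed
  then show thesis using that by blast
qed

lemma liminf_le_liminf_compose:
  fixes f :: "nat \<Rightarrow> 'a::complete_linorder"
  assumes "filterlim r sequentially sequentially"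
  shows "liminf f \<le> liminf (\<lambda>n. f (r n))"
proof -
  have "liminf f \<le> Liminf (filtermap r sequentially) f"
    unfolding Liminf_def using assms
    by (auto simp: filterlim_def le_filter_def intro!: SUP_subset_mono)
  also have "\<dots> \<le> liminf (\<lambda>n. f (r n))" by (rule Liminf_filtermap_le)
  finally show ?thesis .
qed

lemma limsup_compose_le_limsup:
  fixes f :: "nat \<Rightarrow> 'a::complete_linorder"
  assumes "filterlim r sequentially sequentially"
  shows "limsup (\<lambda>n. f (r n)) \<le> limsup f"
proof -
  have "limsup (\<lambda>n. f (r n)) \<le> Limsup (filtermap r sequentially) f"
    by (rule Limsup_filtermap_ge)
  also have "\<dots> \<le> limsup f"
    unfolding Limsup_def using assms
    by (auto simp: filterlim_def le_filter_def intro!: INF_superset_mono)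
  finally show ?thesis .
qed

lemma ereal_liminf_mult_le_liminf:
  fixes s t z w :: "nat \<Rightarrow> real"
  assumes "s \<longlonglongrightarrow> \<rho>" "0 < \<rho>" "t \<longlonglongrightarrow> 0"
    and "\<And>k. s k * z k - t k \<le> w k"
  shows "ereal \<rho> * liminf (\<lambda>k. ereal (z k)) \<le> liminf (\<lambda>k. ereal (w k))"
proof -
  have "ereal \<rho> * liminf (\<lambda>k. ereal (z k)) = liminf (\<lambda>k. ereal (s k * z k))"
    using ereal_liminf_lim_mult[of "\<lambda>k. ereal (s k)" "ereal \<rho>" "\<lambda>k. ereal (z k)"]
      assms(1,2) by simp
  also have "\<dots> = liminf (\<lambda>k. ereal (s k * z k - t k))"
    using ereal_liminf_lim_add[of "\<lambda>k. ereal (- t k)" 0 "\<lambda>k. ereal (s k * z k)"]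
      tendsto_minus[OF assms(3)]
    by (simp add: zero_ereal_def)
  also have "\<dots> \<le> liminf (\<lambda>k. ereal (w k))"
    using assms(4) by (intro Liminf_mono always_eventually) simp
  finally show ?thesis .
qed

lemma ereal_limsup_mult_le_limsup:
  fixes s t z w :: "nat \<Rightarrow> real"
  assumes "s \<longlonglongrightarrow> \<rho>" "0 < \<rho>" "t \<longlonglongrightarrow> 0"
    and "\<And>k. s k * z k - t k \<le> w k"
  shows "ereal \<rho> * limsup (\<lambda>k. ereal (z k)) \<le> limsup (\<lambda>k. ereal (w k))"
proof -
  have "ereal \<rho> * limsup (\<lambda>k. ereal (z k)) = limsup (\<lambda>k. ereal (s k * z k))"
    using ereal_limsup_lim_mult[of "\<lambda>k. ereal (s k)" "ereal \<rho>" "\<lambda>k. ereal (z k)"]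
      assms(1,2) by simp
  also have "\<dots> = limsup (\<lambda>k. ereal (s k * z k - t k))"
    using ereal_limsup_lim_add[of "\<lambda>k. ereal (- t k)" 0 "\<lambda>k. ereal (s k * z k)"]
      tendsto_minus[OF assms(3)]
    by (simp add: zero_ereal_def)
  also have "\<dots> \<le> limsup (\<lambda>k. ereal (w k))"
    using assms(4) by (intro Limsup_mono always_eventually) simp
  finally show ?thesis .
qed

lemma liminf_density_rescale:
  fixes a c :: "nat \<Rightarrow> real" and M C :: real
  assumes "0 < M" "\<And>n m. M * real n \<le> real m \<Longrightarrow> a n \<le> c m + C" "\<And>n. 0 \<le> a n"
  shows "ereal (1 / M) * liminf (\<lambda>n. ereal (a n / real n))
    \<le> liminf (\<lambda>m. ereal (c m / real m))"
proof -
  define r where "r m = nat \<lfloor>real m / M\<rfloor>" for m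
  have r_lim: "filterlim r sequentially sequentially"
    unfolding r_def using assms(1) by real_asymp
  have r_ratio: "(\<lambda>m. real (r m) / real m) \<longlonglongrightarrow> 1 / M"
    unfolding r_def using assms(1) by (real_asymp simp: divide_inverse)
  have bound: "real (r m) / real m * (a (r m) / real (r m)) - C / real m \<le> c m / real m" for m
  proof -
    have "real (r m) \<le> real m / M"
      unfolding r_def using assms(1) by simp
    then have "M * real (r m) \<le> real m"
      using assms(1) by (simp add: pos_le_divide_eq mult.commute)
    from assms(2)[OF this] have "(a (r m) - C) / real m \<le> c m / real m"
      by (intro divide_right_mono) simp_all
    moreover have "real (r m) / real m * (a (r m) / real (r m)) \<le> a (r m) / real m"
      using assms(3) by (cases "r m = 0") simp_all
    ultimately show ?thesis by (simp add: diff_divide_distrib)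
  qed
  have "ereal (1 / M) * liminf (\<lambda>n. ereal (a n / real n))
      \<le> ereal (1 / M) * liminf (\<lambda>m. ereal (a (r m) / real (r m)))"
    using liminf_le_liminf_compose[OF r_lim] assms(1) by (intro ereal_mult_left_mono) simp_all
  also have "\<dots> \<le> liminf (\<lambda>m. ereal (c m / real m))"
    using assms(1) by (intro ereal_liminf_mult_le_liminf[OF r_ratio _ lim_const_over_n bound]) simp
  finally show ?thesis .
qed

lemma limsup_density_rescale:
  fixes a c :: "nat \<Rightarrow> real" and M C :: real
  assumes "0 < M" "\<And>n m. M * real n \<le> real m \<Longrightarrow> a n \<le> c m + C" "\<And>n. 0 \<le> a n"
  shows "ereal (1 / M) * limsup (\<lambda>n. ereal (a n / real n))
    \<le> limsup (\<lambda>m. ereal (c m / real m))"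
proof -
  define r where "r n = nat \<lceil>M * real n\<rceil>" for n
  have r_lim: "filterlim r sequentially sequentially"
    unfolding r_def using assms(1) by real_asymp
  have r_ratio: "(\<lambda>n. real n / real (r n)) \<longlonglongrightarrow> 1 / M"
    unfolding r_def using assms(1) by (real_asymp simp: divide_inverse)
  have C_over_r: "(\<lambda>n. C / real (r n)) \<longlonglongrightarrow> 0"
    by (rule filterlim_compose[OF lim_const_over_n r_lim])
  have bound:
    "real n / real (r n) * (a n / real n) - C / real (r n) \<le> c (r n) / real (r n)" for n
  proof -
    have "M * real n \<le> real (r n)"
      unfolding r_def by linarith
    from assms(2)[OF this] have "(a n - C) / real (r n) \<le> c (r n) / real (r n)"
      by (intro divide_right_mono) simp_all
    moreover have "real n / real (r n) * (a n / real n) \<le> a n / real (r n)"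
      using assms(3) by (cases "n = 0") simp_all
    ultimately show ?thesis by (simp add: diff_divide_distrib)
  qed
  have "ereal (1 / M) * limsup (\<lambda>n. ereal (a n / real n))
      \<le> limsup (\<lambda>n. ereal (c (r n) / real (r n)))"
    using assms(1) by (intro ereal_limsup_mult_le_limsup[OF r_ratio _ C_over_r bound]) simp
  also have "\<dots> \<le> limsup (\<lambda>m. ereal (c m / real m))"
    using limsup_compose_le_limsup[OF r_lim] .
  finally show ?thesis .
qed

theorem lemma7p6:
  fixes M :: real and x :: "nat \<Rightarrow> nat" and K L :: "nat set"
  assumes "M \<ge> 1"
    and "language K"
    and "bounded_disp_enum M x K"
    and "language L"
    and "L \<subseteq> K"
  shows "mu_low L K \<ge> ereal (1 / M) *
           liminf (\<lambda>n. ereal (real (card (L \<inter> x ` {1..n})) / real n)) \<and>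
         mu_up L K \<ge> ereal (1 / M) *
           limsup (\<lambda>n. ereal (real (card (L \<inter> x ` {1..n})) / real n))"
proof -
  have M: "0 < M" using assms(1) by simp
  have "infinite K" using assms(2) by (simp add: language_def)
  then obtain C where C: "\<And>n m. M * real n \<le> real m \<Longrightarrow>
      card (L \<inter> x ` {1..n}) \<le> card (L \<inter> prefix K m) + C"
    using bounded_disp_enum_card_le assms(3,5) M by (metis less_imp_le)
  then have "\<And>n m. M * real n \<le> real m \<Longrightarrow>
      real (card (L \<inter> x ` {1..n})) \<le> real (card (L \<inter> prefix K m)) + real C"
    by (metis of_nat_add of_nat_mono)
  from liminf_density_rescale[OF M this] limsup_density_rescale[OF M this]
  show ?thesis unfolding mu_low_def mu_up_def by simp
qed

end
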